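(* Let $\mathbb{C}$ be a locally small category and $\mathbb{C}_{\mathit{fin}}$ a full subcategory satisfying (C1)–(C5) below. Let $F\in\mathrm{Ob}(\mathbb{C})$ be a locally finite object whose automorphisms are finitely separated. Then $\mathrm{Aut}(F)$ endowed with the topology $\tau_F$ is a Hausdorff topological group.
   Context: Write $A\to B$ if $\hom(A,B)\ne\varnothing$. Conditions: (C1) all morphisms of $\mathbb{C}$ are monomorphisms; (C2) $\mathrm{Ob}(\mathbb{C}_{\mathit{fin}})$ is a set; (C3) $\hom(A,B)$ is finite for $A,B\in\mathrm{Ob}(\mathbb{C}_{\mathit{fin}})$; (C4) for every $F\in\mathrm{Ob}(\mathbb{C})$ there is $A\in\mathrm{Ob}(\mathbb{C}_{\mathit{fin}})$ with $A\to F$; (C5) for every $B\in\mathrm{Ob}(\mathbb{C}_{\mathit{fin}})$ the set $\{A\in\mathrm{Ob}(\mathbb{C}_{\mathit{fin}}):A\to B\}$ is finite. $F$ is locally finite if for all $A,B\in\mathrm{Ob}(\mathbb{C}_{\mathit{fin}})$, $e\in\hom(A,F)$, $f\in\hom(B,F)$ there exist $D\in\mathrm{Ob}(\mathbb{C}_{\mathit{fin}})$, $r\in\hom(D,F)$, $p\in\hom(A,D)$, $q\in\hom(B,D)$ with $r\cdot p=e$, $r\cdot q=f$, such that for every $H\in\mathrm{Ob}(\mathbb{C})$, $r'\in\hom(H,F)$, $p'\in\hom(A,H)$, $q'\in\hom(B,H)$ with $r'\cdot p'=e$, $r'\cdot q'=f$ there is $s\in\hom(D,H)$ with $r'\cdot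 s=r$, $s\cdot p=p'$, $s\cdot q=q'$. The automorphisms of $F$ are finitely separated if for all $f\ne g$ in $\mathrm{Aut}(F)$ there are $A\in\mathrm{Ob}(\mathbb{C}_{\mathit{fin}})$ and $e\in\hom(A,F)$ with $f\cdot e\ne g\cdot e$. $\tau_F$ is the topology on $\mathrm{Aut}(F)$ having as a base the sets $N_F(e_1,e_2)=\{f\in\mathrm{Aut}(F):f\cdot e_1=e_2\}$, $A\in\mathrm{Ob}(\mathbb{C}_{\mathit{fin}})$, $A\to F$, $e_1,e_2\in\hom(A,F)$. *)

theory Defs
  imports "HOL-Analysis.Analysis" "HOL-Algebra.Group"
begin

record ('o, 'm) cat =
  Ob  :: "'o set"
  Ar  :: "'m set"
  Dom :: "'m \<Rightarrow> 'o"
  Cod :: "'m \<Rightarrow> 'o"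
  Cmp :: "'m \<Rightarrow> 'm \<Rightarrow> 'm"   (* Cmp C g f = g \<cdot> f  (first f, then g) *)
  Idt :: "'o \<Rightarrow> 'm"

definition category :: "('o, 'm) cat \<Rightarrow> bool" where
  "category C \<longleftrightarrow>
     (\<forall>f\<in>Ar C. Dom C f \<in> Ob C \<and> Cod C f \<in> Ob C) \<and>
     (\<forall>A\<in>Ob C. Idt C A \<in> Ar C \<and> Dom C (Idt C A) = A \<and> Cod C (Idt C A) = A) \<and>
     (\<forall>f\<in>Ar C. \<forall>g\<in>Ar C. Cod C f = Dom C g \<longrightarrow>
         Cmp C g f \<in> Ar C \<and> Dom C (Cmp C g f) = Dom C f \<and> Cod C (Cmp C g f) = Cod C g) \<and>
     (\<forall>f\<in>Ar C. \<forall>g\<in>Ar C. \<forall>h\<in>Ar C. Cod C f = Dom C g \<longrightarrow> Cod C g = Dom C h \<longrightarrow>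
         Cmp C h (Cmp C g f) = Cmp C (Cmp C h g) f) \<and>
     (\<forall>f\<in>Ar C. Cmp C (Idt C (Cod C f)) f = f \<and> Cmp C f (Idt C (Dom C f)) = f)"

definition hom :: "('o, 'm) cat \<Rightarrow> 'o \<Rightarrow> 'o \<Rightarrow> 'm set" where
  "hom C A B = {f \<in> Ar C. Dom C f = A \<and> Cod C f = B}"

definition arrow_to :: "('o, 'm) cat \<Rightarrow> 'o \<Rightarrow> 'o \<Rightarrow> bool" where
  "arrow_to C A B \<longleftrightarrow> hom C A B \<noteq> {}"

definition cond_C1 :: "('o, 'm) cat \<Rightarrow> bool" where
  "cond_C1 C \<longleftrightarrow> (\<forall>X\<in>Ob C. \<forall>A\<in>Ob C. \<forall>B\<in>Ob C. \<forall>f\<in>hom C A B. \<forall>g\<in>hom C X A. \<forall>h\<in>hom C X A.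
       Cmp C f g = Cmp C f h \<longrightarrow> g = h)"

(* (C2) "Ob(C_fin) is a set" holds automatically in HOL: Fin :: 'o set. *)

definition cond_C3 :: "('o, 'm) cat \<Rightarrow> 'o set \<Rightarrow> bool" where
  "cond_C3 C Fin \<longleftrightarrow> (\<forall>A\<in>Fin. \<forall>B\<in>Fin. finite (hom C A B))"

definition cond_C4 :: "('o, 'm) cat \<Rightarrow> 'o set \<Rightarrow> bool" where
  "cond_C4 C Fin \<longleftrightarrow> (\<forall>F\<in>Ob C. \<exists>A\<in>Fin. arrow_to C A F)"

definition cond_C5 :: "('o, 'm) cat \<Rightarrow> 'o set \<Rightarrow> bool" where
  "cond_C5 C Fin \<longleftrightarrow> (\<forall>B\<in>Fin. finite {A \<in> Fin. arrow_to C A B})"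

definition locally_finite :: "('o, 'm) cat \<Rightarrow> 'o set \<Rightarrow> 'o \<Rightarrow> bool" where
  "locally_finite C Fin F \<longleftrightarrow>
    (\<forall>A\<in>Fin. \<forall>B\<in>Fin. \<forall>e\<in>hom C A F. \<forall>f\<in>hom C B F.
       \<exists>D\<in>Fin. \<exists>r\<in>hom C D F. \<exists>p\<in>hom C A D. \<exists>q\<in>hom C B D.
         Cmp C r p = e \<and> Cmp C r q = f \<and>
         (\<forall>H\<in>Ob C. \<forall>r'\<in>hom C H F. \<forall>p'\<in>hom C A H. \<forall>q'\<in>hom C B H.
            Cmp C r' p' = e \<and> Cmp C r' q' = f \<longrightarrow>
            (\<exists>s\<in>hom C D H. Cmp C r' s = r \<and> Cmp C s p = p' \<and> Cmp C s q = q')))"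

definition Aut :: "('o, 'm) cat \<Rightarrow> 'o \<Rightarrow> 'm set" where
  "Aut C F = {f \<in> hom C F F. \<exists>g\<in>hom C F F. Cmp C g f = Idt C F \<and> Cmp C f g = Idt C F}"

definition Aut_group :: "('o, 'm) cat \<Rightarrow> 'o \<Rightarrow> 'm monoid" where
  "Aut_group C F = \<lparr>carrier = Aut C F, mult = (\<lambda>f g. Cmp C f g), one = Idt C F\<rparr>"

definition fin_separated :: "('o, 'm) cat \<Rightarrow> 'o set \<Rightarrow> 'o \<Rightarrow> bool" where
  "fin_separated C Fin F \<longleftrightarrow>
    (\<forall>f\<in>Aut C F. \<forall>g\<in>Aut C F. f \<noteq> g \<longrightarrow>
       (\<exists>A\<in>Fin. \<exists>e\<in>hom C A F. Cmp C f e \<noteq> Cmp C g e))"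

definition N_F :: "('o, 'm) cat \<Rightarrow> 'o \<Rightarrow> 'm \<Rightarrow> 'm \<Rightarrow> 'm set" where
  "N_F C F e1 e2 = {f \<in> Aut C F. Cmp C f e1 = e2}"

definition tau :: "('o, 'm) cat \<Rightarrow> 'o set \<Rightarrow> 'o \<Rightarrow> 'm topology" where
  "tau C Fin F = topology_generated_by
     {N_F C F e1 e2 | A e1 e2. A \<in> Fin \<and> arrow_to C A F \<and> e1 \<in> hom C A F \<and> e2 \<in> hom C A F}"

definition Hausdorff_topological_group :: "('a, 'b) monoid_scheme \<Rightarrow> 'a topology \<Rightarrow> bool" where
  "Hausdorff_topological_group G T \<longleftrightarrow>
     group G \<and> topspace T = carrier G \<and>
     continuous_map (prod_topology T T) T (\<lambda>(x, y). x \<otimes>\<^bsub>G\<^esub> y) \<and>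
     continuous_map T T (\<lambda>x. inv\<^bsub>G\<^esub> x) \<and>
     Hausdorff_space T"

end

theory Submission
  imports Defs
begin

(* The sets N_F(e1, e2) form a subbasis of tau_F, so continuity of the group operations can be
   checked on them: if f g e1 = e2 then N_F(g e1, e2) * N_F(e1, g e1) lies in N_F(e1, e2), and
   the inverse maps N_F(e1, e2) onto N_F(e2, e1).  Two distinct automorphisms f, g differ on
   some e : A -> F with A finite, and then N_F(e, f e) and N_F(e, g e) separate them. *)

lemma hom_comp:
  "category C \<Longrightarrow> f \<in> hom C A B \<Longrightarrow> g \<in> hom C B D \<Longrightarrow> Cmp C g f \<in> hom C A D"
  unfolding category_def hom_def by auto

lemma Cmp_assoc:
  "category C \<Longrightarrow> f \<in> hom C A B \<Longrightarrow> g \<in> hom C B D \<Longrightarrow> h \<in> hom C D E \<Longrightarrow>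
   Cmp C h (Cmp C g f) = Cmp C (Cmp C h g) f"
  unfolding category_def hom_def by auto

lemma Idt_in_hom: "category C \<Longrightarrow> A \<in> Ob C \<Longrightarrow> Idt C A \<in> hom C A A"
  unfolding category_def hom_def by auto

lemma Cmp_Idt_left: "category C \<Longrightarrow> f \<in> hom C A B \<Longrightarrow> Cmp C (Idt C B) f = f"
  unfolding category_def hom_def by auto

lemma Aut_in_hom: "f \<in> Aut C F \<Longrightarrow> f \<in> hom C F F"
  unfolding Aut_def by auto

lemma carrier_Aut_group [simp]: "carrier (Aut_group C F) = Aut C F"
  and mult_Aut_group [simp]: "mult (Aut_group C F) = Cmp C"
  and one_Aut_group [simp]: "\<one>\<^bsub>Aut_group C F\<^esub> = Idt C F"
  by (simp_all add: Aut_group_def)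

lemma openin_tau_N_F:
  "A \<in> Fin \<Longrightarrow> e1 \<in> hom C A F \<Longrightarrow> e2 \<in> hom C A F \<Longrightarrow> openin (tau C Fin F) (N_F C F e1 e2)"
  unfolding tau_def arrow_to_def by (rule topology_generated_by_Basis) blast

lemma continuous_map_into_tau:
  assumes "\<And>A e1 e2. A \<in> Fin \<Longrightarrow> e1 \<in> hom C A F \<Longrightarrow> e2 \<in> hom C A F \<Longrightarrow>
      openin X {x \<in> topspace X. \<phi> x \<in> N_F C F e1 e2}"
    and "\<phi> ` topspace X \<subseteq> topspace (tau C Fin F)"
  shows "continuous_map X (tau C Fin F) \<phi>"
  using assms unfolding tau_def arrow_to_def
  by (intro continuous_on_generated_topo) (auto simp: Int_commute Collect_conj_eq vimage_def)

lemma topspace_tau: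
  assumes cat: "category C"
  shows "topspace (tau C Fin F) = (if \<exists>A\<in>Fin. arrow_to C A F then Aut C F else {})"
proof -
  have "f \<in> topspace (tau C Fin F)" if "f \<in> Aut C F" "A \<in> Fin" "e \<in> hom C A F" for f A e
  proof -
    have "Cmp C f e \<in> hom C A F"
      using hom_comp[OF cat that(3) Aut_in_hom[OF that(1)]] .
    then have "openin (tau C Fin F) (N_F C F e (Cmp C f e))"
      by (rule openin_tau_N_F[OF that(2,3)])
    then show ?thesis
      using openin_subset that(1) by (fastforce simp: N_F_def)
  qed
  then show ?thesis
    unfolding tau_def arrow_to_def by (auto simp: N_F_def)
qed

context
  fixes C :: "('o, 'm) cat" and Fin :: "'o set" and F :: 'o
  assumes cat: "category C" and F: "F \<in> Ob C"
begin

lemma Idt_in_Aut: "Idt C F \<in> Aut C F"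
  using Idt_in_hom[OF cat F] Cmp_Idt_left[OF cat] unfolding Aut_def by blast

lemma Cmp_assoc_End:
  "a \<in> hom C F F \<Longrightarrow> b \<in> hom C F F \<Longrightarrow> c \<in> hom C F F \<Longrightarrow>
   Cmp C a (Cmp C b c) = Cmp C (Cmp C a b) c"
  using Cmp_assoc[OF cat] by blast

lemma Aut_comp:
  assumes f: "f \<in> Aut C F" and g: "g \<in> Aut C F"
  shows "Cmp C f g \<in> Aut C F"
proof -
  obtain f' where f': "f' \<in> hom C F F" "Cmp C f' f = Idt C F" "Cmp C f f' = Idt C F"
    using f unfolding Aut_def by blast
  obtain g' where g': "g' \<in> hom C F F" "Cmp C g' g = Idt C F" "Cmp C g g' = Idt C F"
    using g unfolding Aut_def by blast
  note fF = Aut_in_hom[OF f] and gF = Aut_in_hom[OF g]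
  have "Cmp C (Cmp C g' f') (Cmp C f g) = Cmp C g' (Cmp C (Cmp C f' f) g)"
    using fF gF f'(1) g'(1) by (simp add: Cmp_assoc_End hom_comp[OF cat])
  also have "\<dots> = Idt C F"
    using gF g' f'(2) by (simp add: Cmp_Idt_left[OF cat])
  finally have left: "Cmp C (Cmp C g' f') (Cmp C f g) = Idt C F" .
  have "Cmp C (Cmp C f g) (Cmp C g' f') = Cmp C f (Cmp C (Cmp C g g') f')"
    using fF gF f'(1) g'(1) by (simp add: Cmp_assoc_End hom_comp[OF cat])
  also have "\<dots> = Idt C F"
    using f' g'(3) by (simp add: Cmp_Idt_left[OF cat])
  finally have right: "Cmp C (Cmp C f g) (Cmp C g' f') = Idt C F" .
  show ?thesis
    using left right hom_comp[OF cat gF fF] hom_comp[OF cat f'(1) g'(1)] unfolding Aut_def by blast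
qed

lemma group_Aut_group: "group (Aut_group C F)"
proof (rule groupI)
  fix x assume "x \<in> carrier (Aut_group C F)"
  then obtain y where "y \<in> hom C F F" "Cmp C y x = Idt C F" "Cmp C x y = Idt C F"
    by (auto simp: Aut_def)
  then have "y \<in> Aut C F" "Cmp C y x = Idt C F"
    using \<open>x \<in> carrier (Aut_group C F)\<close> by (auto simp: Aut_def)
  then show "\<exists>y\<in>carrier (Aut_group C F). y \<otimes>\<^bsub>Aut_group C F\<^esub> x = \<one>\<^bsub>Aut_group C F\<^esub>"
    by auto
qed (auto simp: Aut_comp Idt_in_Aut Cmp_Idt_left[OF cat Aut_in_hom] Cmp_assoc_End Aut_in_hom)

lemma inv_Aut_group:
  assumes "f \<in> Aut C F"
  shows "inv\<^bsub>Aut_group C F\<^esub> f \<in> Aut C F"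
    and "Cmp C (inv\<^bsub>Aut_group C F\<^esub> f) f = Idt C F"
    and "Cmp C f (inv\<^bsub>Aut_group C F\<^esub> f) = Idt C F"
  using group.inv_closed[OF group_Aut_group] group.l_inv[OF group_Aut_group]
    group.r_inv[OF group_Aut_group] assms by auto

lemma Cmp_mem_N_F_iff:
  assumes f: "f \<in> Aut C F" and g: "g \<in> Aut C F" and e1: "e1 \<in> hom C A F"
  shows "Cmp C f g \<in> N_F C F e1 e2 \<longleftrightarrow> f \<in> N_F C F (Cmp C g e1) e2"
  using Aut_comp[OF f g] f Cmp_assoc[OF cat e1 Aut_in_hom[OF g] Aut_in_hom[OF f]]
  by (simp add: N_F_def)

lemma inv_mem_N_F_iff:
  assumes "f \<in> Aut C F" "e1 \<in> hom C A F" "e2 \<in> hom C A F"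
  shows "inv\<^bsub>Aut_group C F\<^esub> f \<in> N_F C F e1 e2 \<longleftrightarrow> f \<in> N_F C F e2 e1"
proof -
  let ?i = "inv\<^bsub>Aut_group C F\<^esub> f"
  note i = inv_Aut_group[OF assms(1)]
  have "Cmp C ?i e1 = e2 \<Longrightarrow> Cmp C f e2 = e1"
    using Cmp_assoc[OF cat assms(2) Aut_in_hom[OF i(1)] Aut_in_hom[OF assms(1)]] i(3)
      Cmp_Idt_left[OF cat assms(2)] by simp
  moreover have "Cmp C f e2 = e1 \<Longrightarrow> Cmp C ?i e1 = e2"
    using Cmp_assoc[OF cat assms(3) Aut_in_hom[OF assms(1)] Aut_in_hom[OF i(1)]] i(2)
      Cmp_Idt_left[OF cat assms(3)] by simp
  ultimately show ?thesis
    using assms(1) i(1) by (auto simp: N_F_def)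
qed

lemma topspace_tau_subset_Aut: "topspace (tau C Fin F) \<subseteq> Aut C F"
  by (simp add: topspace_tau[OF cat])

lemma continuous_map_Cmp_tau:
  "continuous_map (prod_topology (tau C Fin F) (tau C Fin F)) (tau C Fin F) (\<lambda>(f, g). Cmp C f g)"
proof (rule continuous_map_into_tau)
  fix A e1 e2 assume A: "A \<in> Fin" and e1: "e1 \<in> hom C A F" and e2: "e2 \<in> hom C A F"
  let ?P = "{z \<in> topspace (prod_topology (tau C Fin F) (tau C Fin F)).
              (\<lambda>(f, g). Cmp C f g) z \<in> N_F C F e1 e2}"
  show "openin (prod_topology (tau C Fin F) (tau C Fin F)) ?P"
    unfolding openin_prod_topology_alt
  proof (intro allI impI)
    fix f g assume "(f, g) \<in> ?P"
    then have f: "f \<in> Aut C F" and g: "g \<in> Aut C F" and fg: "Cmp C f g \<in> N_F C F e1 e2"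
      using topspace_tau_subset_Aut by auto
    have ge1: "Cmp C g e1 \<in> hom C A F"
      using hom_comp[OF cat e1 Aut_in_hom[OF g]] .
    let ?U = "N_F C F (Cmp C g e1) e2" and ?V = "N_F C F e1 (Cmp C g e1)"
    have U: "openin (tau C Fin F) ?U" and V: "openin (tau C Fin F) ?V"
      using openin_tau_N_F[OF A ge1 e2] openin_tau_N_F[OF A e1 ge1] by auto
    have "(f', g') \<in> ?P" if f': "f' \<in> ?U" and g': "g' \<in> ?V" for f' g'
    proof -
      have "f' \<in> N_F C F (Cmp C g' e1) e2"
        using f' g' by (simp add: N_F_def)
      then have "Cmp C f' g' \<in> N_F C F e1 e2"
        using Cmp_mem_N_F_iff[OF _ _ e1] f' g' by (simp add: N_F_def)
      then show ?thesis
        using f' g' openin_subset[OF U] openin_subset[OF V] by auto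
    qed
    then have "?U \<times> ?V \<subseteq> ?P"
      by blast
    moreover have "f \<in> ?U" "g \<in> ?V"
      using fg Cmp_mem_N_F_iff[OF f g e1] g by (auto simp: N_F_def)
    ultimately show "\<exists>U V. openin (tau C Fin F) U \<and> openin (tau C Fin F) V \<and>
        f \<in> U \<and> g \<in> V \<and> U \<times> V \<subseteq> ?P"
      using U V by blast
  qed
next
  show "(\<lambda>(f, g). Cmp C f g) ` topspace (prod_topology (tau C Fin F) (tau C Fin F))
      \<subseteq> topspace (tau C Fin F)"
    by (auto simp: topspace_tau[OF cat] Aut_comp split: if_splits)
qed

lemma continuous_map_inv_tau:
  "continuous_map (tau C Fin F) (tau C Fin F) (\<lambda>f. inv\<^bsub>Aut_group C F\<^esub> f)"
proof (rule continuous_map_into_tau)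
  fix A e1 e2 assume A: "A \<in> Fin" and e1: "e1 \<in> hom C A F" and e2: "e2 \<in> hom C A F"
  have "N_F C F e2 e1 \<subseteq> topspace (tau C Fin F)"
    using openin_subset[OF openin_tau_N_F[OF A e2 e1]] .
  then have "{f \<in> topspace (tau C Fin F). inv\<^bsub>Aut_group C F\<^esub> f \<in> N_F C F e1 e2} = N_F C F e2 e1"
    using inv_mem_N_F_iff[OF _ e1 e2] topspace_tau_subset_Aut by (auto simp: N_F_def)
  then show "openin (tau C Fin F) {f \<in> topspace (tau C Fin F). inv\<^bsub>Aut_group C F\<^esub> f \<in> N_F C F e1 e2}"
    using openin_tau_N_F[OF A e2 e1] by simp
next
  show "(\<lambda>f. inv\<^bsub>Aut_group C F\<^esub> f) ` topspace (tau C Fin F) \<subseteq> topspace (tau C Fin F)"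
    by (auto simp: topspace_tau[OF cat] inv_Aut_group split: if_splits)
qed

lemma Hausdorff_space_tau:
  assumes "fin_separated C Fin F"
  shows "Hausdorff_space (tau C Fin F)"
  unfolding Hausdorff_space_def
proof clarify
  fix f g assume "f \<in> topspace (tau C Fin F)" "g \<in> topspace (tau C Fin F)" "f \<noteq> g"
  then have f: "f \<in> Aut C F" and g: "g \<in> Aut C F" and "f \<noteq> g"
    using topspace_tau_subset_Aut by auto
  then obtain A e where A: "A \<in> Fin" and e: "e \<in> hom C A F" and differ: "Cmp C f e \<noteq> Cmp C g e"
    using assms unfolding fin_separated_def by blast
  let ?U = "N_F C F e (Cmp C f e)" and ?V = "N_F C F e (Cmp C g e)"
  have "openin (tau C Fin F) ?U" "openin (tau C Fin F) ?V"
    using openin_tau_N_F[OF A e] hom_comp[OF cat e Aut_in_hom] f g by auto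
  moreover have "f \<in> ?U" "g \<in> ?V" "disjnt ?U ?V"
    using f g differ by (auto simp: N_F_def disjnt_def)
  ultimately show "\<exists>U V. openin (tau C Fin F) U \<and> openin (tau C Fin F) V \<and> f \<in> U \<and> g \<in> V \<and> disjnt U V"
    by blast
qed

end

theorem lemma4p3:
  fixes C :: "('o, 'm) cat" and Fin :: "'o set" and F :: 'o
  assumes "category C"
    and "Fin \<subseteq> Ob C"
    and "cond_C1 C"
    and "cond_C3 C Fin"
    and "cond_C4 C Fin"
    and "cond_C5 C Fin"
    and "F \<in> Ob C"
    and "locally_finite C Fin F"
    and "fin_separated C Fin F"
  shows "Hausdorff_topological_group (Aut_group C F) (tau C Fin F)"
proof -
  note cat = assms(1) and F = assms(7)
  have "\<exists>A\<in>Fin. arrow_to C A F"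
    using assms(5) F unfolding cond_C4_def by blast
  then have "topspace (tau C Fin F) = carrier (Aut_group C F)"
    by (simp add: topspace_tau[OF cat])
  then show ?thesis
    unfolding Hausdorff_topological_group_def
    using group_Aut_group[OF cat F] continuous_map_Cmp_tau[OF cat F]
      continuous_map_inv_tau[OF cat F] Hausdorff_space_tau[OF cat F assms(9)]
    by simp
qed

end
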